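(* If the Markov monoid of a probabilistic automaton $\mathcal{A}$ contains a non-simplicity witness, then $\mathcal{A}$ is not simple.
   Context: Fix a finite alphabet $A$ and a probabilistic automaton $\mathcal{A}=(Q,q_0,\Delta,F)$, $\Delta:Q\times A\to\mathcal{D}(Q)$. For $a\in A$ let $M_a(s,t)=\Delta(s,a)(t)$, for $u=a_0\cdots a_{n-1}$ let $M_u=M_{a_0}\cdots M_{a_{n-1}}$ (identity for the empty word), $\mathbb{P}_{\mathcal{A}}(s\xrightarrow{u}t)=M_u(s,t)$ and $\mathbb{P}_{\mathcal{A}}(s\xrightarrow{u}T)=\sum_{t\in T}\mathbb{P}_{\mathcal{A}}(s\xrightarrow{u}t)$. For $w\in A^\omega$, $w_{<k}$ is its prefix of length $k$. The process induced by $w\in A^\omega$ from $p\in Q$ is simple if there exist $\lambda>0$ and sequences $(A_k),(B_k)$ of subsets of $Q$ with $A_k\cap B_k=\emptyset$, $A_k\cup B_k=Q$ for all $k$, $\mathbb{P}_{\mathcal{A}}(p\xrightarrow{w_{<k}}q)\ge\lambda$ for all $k$ and $q\in A_k$, and $\lim_n\mathbb{P}_{\mathcal{A}}(p\xrightarrow{w_{<n}}B_n)=0$; $\mathcal{A}$ is simple if every such process (all $w$, all $p$) is simple. A limit-word is a map $\mathbf{u}:Q\times Q\to\{0,1\}$ such that every $s$ has some $t$ with $\mathbf{u}(s,t)=1$. Concatenation: $(\mathbf{u}\cdot\mathbf{v})(s,t)=1$ iff there is $q$ with $\mathbf{u}(s,q)=\mathbf{v}(q,t)=1$ (written $\mathbf{u}\mathbf{v}$).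 $\mathbf{u}$ is idempotent if $\mathbf{u}\mathbf{u}=\mathbf{u}$; for idempotent $\mathbf{u}$, $s$ is $\mathbf{u}$-recurrent if for all $t$, $\mathbf{u}(s,t)=1\Rightarrow\mathbf{u}(t,s)=1$, and $\mathbf{u}$-transient otherwise; $\mathbf{u}^\sharp(s,t)=1$ iff $\mathbf{u}(s,t)=1$ and $t$ is $\mathbf{u}$-recurrent. For $a\in A$, $\mathbf{a}(s,t)=1$ iff $\Delta(s,a)(t)>0$; $\mathbf{1}$ is the identity. The Markov monoid of $\mathcal{A}$ is the smallest set of limit-words containing $\{\mathbf{a}\mid a\in A\}\cup\{\mathbf{1}\}$ and closed under concatenation and iteration of idempotents. A non-simplicity witness is a triple $(\mathbf{u},\mathbf{v},\mathbf{w})$ of elements of the Markov monoid, with $\mathbf{v}$ idempotent, for which there exist states $r,t$ such that: $\mathbf{u}\mathbf{v}^\sharp\mathbf{w}$ is idempotent, $r$ is $\mathbf{u}\mathbf{v}^\sharp\mathbf{w}$-recurrent, $(\mathbf{u}\mathbf{v})(r,t)=1$, and $t$ is $\mathbf{v}$-transient. *)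

theory Defs
  imports Complex_Main
begin

text \<open>A probabilistic automaton over a finite alphabet 'a with finite state set 'q is
  given by its transition function Delta s a t = probability to go from s to t reading a.
  The initial state and final states play no role for simplicity.\<close>

definition stochastic :: "('q::finite \<Rightarrow> 'a::finite \<Rightarrow> 'q \<Rightarrow> real) \<Rightarrow> bool" where
  "stochastic Delta \<longleftrightarrow> (\<forall>s a t. Delta s a t \<ge> 0) \<and> (\<forall>s a. (\<Sum>t\<in>UNIV. Delta s a t) = 1)"

fun prob :: "('q::finite \<Rightarrow> 'a \<Rightarrow> 'q \<Rightarrow> real) \<Rightarrow> 'q \<Rightarrow> 'a list \<Rightarrow> 'q \<Rightarrow> real" where
  "prob Delta s [] t = (if s = t then 1 else 0)"
| "prob Delta s (a # u) t = (\<Sum>q\<in>UNIV. Delta s a q * prob Delta q u t)"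

definition prob_set :: "('q::finite \<Rightarrow> 'a \<Rightarrow> 'q \<Rightarrow> real) \<Rightarrow> 'q \<Rightarrow> 'a list \<Rightarrow> 'q set \<Rightarrow> real" where
  "prob_set Delta s u T = (\<Sum>t\<in>T. prob Delta s u t)"

definition prefix_word :: "(nat \<Rightarrow> 'a) \<Rightarrow> nat \<Rightarrow> 'a list" where
  "prefix_word w k = map w [0..<k]"

definition simple_process :: "('q::finite \<Rightarrow> 'a \<Rightarrow> 'q \<Rightarrow> real) \<Rightarrow> (nat \<Rightarrow> 'a) \<Rightarrow> 'q \<Rightarrow> bool" where
  "simple_process Delta w p \<longleftrightarrow>
     (\<exists>lam > 0. \<exists>A B :: nat \<Rightarrow> 'q set.
        (\<forall>k. A k \<inter> B k = {} \<and> A k \<union> B k = UNIV) \<and>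
        (\<forall>k. \<forall>q\<in>A k. prob Delta p (prefix_word w k) q \<ge> lam) \<and>
        (\<lambda>n. prob_set Delta p (prefix_word w n) (B n)) \<longlonglongrightarrow> 0)"

definition simple_automaton :: "('q::finite \<Rightarrow> 'a \<Rightarrow> 'q \<Rightarrow> real) \<Rightarrow> bool" where
  "simple_automaton Delta \<longleftrightarrow> (\<forall>w p. simple_process Delta w p)"

type_synonym 'q lword = "'q \<Rightarrow> 'q \<Rightarrow> bool"

definition is_limit_word :: "'q lword \<Rightarrow> bool" where
  "is_limit_word u \<longleftrightarrow> (\<forall>s. \<exists>t. u s t)"

definition lw_concat :: "'q lword \<Rightarrow> 'q lword \<Rightarrow> 'q lword" where
  "lw_concat u v = (\<lambda>s t. \<exists>q. u s q \<and> v q t)"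

definition idempotent_lw :: "'q lword \<Rightarrow> bool" where
  "idempotent_lw u \<longleftrightarrow> lw_concat u u = u"

definition recurrent :: "'q lword \<Rightarrow> 'q \<Rightarrow> bool" where
  "recurrent u s \<longleftrightarrow> (\<forall>t. u s t \<longrightarrow> u t s)"

definition transient :: "'q lword \<Rightarrow> 'q \<Rightarrow> bool" where
  "transient u s \<longleftrightarrow> \<not> recurrent u s"

definition sharp :: "'q lword \<Rightarrow> 'q lword" where
  "sharp u = (\<lambda>s t. u s t \<and> recurrent u t)"

definition letter_lw :: "('q \<Rightarrow> 'a \<Rightarrow> 'q \<Rightarrow> real) \<Rightarrow> 'a \<Rightarrow> 'q lword" where
  "letter_lw Delta a = (\<lambda>s t. Delta s a t > 0)"

definition one_lw :: "'q lword" where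
  "one_lw = (\<lambda>s t. s = t)"

inductive_set markov_monoid :: "('q \<Rightarrow> 'a \<Rightarrow> 'q \<Rightarrow> real) \<Rightarrow> 'q lword set"
  for Delta where
  letter: "letter_lw Delta a \<in> markov_monoid Delta"
| one: "one_lw \<in> markov_monoid Delta"
| concat: "u \<in> markov_monoid Delta \<Longrightarrow> v \<in> markov_monoid Delta \<Longrightarrow> lw_concat u v \<in> markov_monoid Delta"
| iter: "u \<in> markov_monoid Delta \<Longrightarrow> idempotent_lw u \<Longrightarrow> sharp u \<in> markov_monoid Delta"

definition non_simplicity_witness ::
  "('q \<Rightarrow> 'a \<Rightarrow> 'q \<Rightarrow> real) \<Rightarrow> 'q lword \<Rightarrow> 'q lword \<Rightarrow> 'q lword \<Rightarrow> bool" where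
  "non_simplicity_witness Delta u v w \<longleftrightarrow>
     u \<in> markov_monoid Delta \<and> v \<in> markov_monoid Delta \<and> w \<in> markov_monoid Delta \<and>
     idempotent_lw v \<and>
     (\<exists>r t. idempotent_lw (lw_concat (lw_concat u (sharp v)) w) \<and>
            recurrent (lw_concat (lw_concat u (sharp v)) w) r \<and>
            lw_concat u v r t \<and> transient v t)"

end

theory Submission
  imports Defs
begin

text \<open>Every element x of the Markov monoid is realizable: there is d > 0 such that for every e > 0
  some finite word moves each s to each t with probability at least d if x s t holds, and at most e
  otherwise. For an iteration x^# one takes a long power of a word realizing x, along which the mass
  on x-transient states decays geometrically while the mass inside closed classes is almost kept.

  Given a witness (u, v, w), read an infinite word made of blocks U_n V_n^K_n W_n realizing u, v^#
  and w with errors summable in n. From the u v^# w-recurrent state r the process returns to r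
  with probability bounded below at the start of every block, and from there reaches the
  v-transient state t, which carries a v-self-loop. Inside block n the probability of t therefore
  starts above a constant, shrinks by at most a constant factor per copy of V_n and ends below
  2^-n. So for every lam it lies in [c, lam) at arbitrarily late times, which is impossible if the
  states split into those of probability at least lam and a part of vanishing mass.\<close>

section \<open>Probabilities of finite words\<close>

lemma prob_append:
  "prob Delta s (xs @ ys) t = (\<Sum>q\<in>UNIV. prob Delta s xs q * prob Delta q ys t)"
proof (induction xs arbitrary: s)
  case Nil
  have "(\<Sum>q\<in>UNIV. prob Delta s [] q * prob Delta q ys t)
      = (\<Sum>q\<in>UNIV. if q = s then prob Delta s ys t else 0)"
    by (rule sum.cong) auto
  then show ?case by simp
next
  case (Cons a xs)
  have "prob Delta s ((a # xs) @ ys) t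
      = (\<Sum>q'\<in>UNIV. \<Sum>q\<in>UNIV. Delta s a q' * prob Delta q' xs q * prob Delta q ys t)"
    using Cons by (simp add: sum_distrib_left mult.assoc)
  also have "\<dots> = (\<Sum>q\<in>UNIV. \<Sum>q'\<in>UNIV. Delta s a q' * prob Delta q' xs q * prob Delta q ys t)"
    by (rule sum.swap)
  also have "\<dots> = (\<Sum>q\<in>UNIV. prob Delta s (a # xs) q * prob Delta q ys t)"
    by (simp add: sum_distrib_right)
  finally show ?case .
qed

lemma prob_singleton: "prob Delta s [a] t = Delta s a t"
proof -
  have "prob Delta s [a] t = (\<Sum>q\<in>UNIV. if q = t then Delta s a q else 0)"
    by (simp add: if_distrib cong: if_cong)
  then show ?thesis by simp
qed

lemma prob_set_append:
  "prob_set Delta s (xs @ ys) S = (\<Sum>q\<in>UNIV. prob Delta s xs q * prob_set Delta q ys S)"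
  unfolding prob_set_def prob_append by (subst sum.swap) (simp add: sum_distrib_left)

lemma concat_replicate_Suc_snoc: "concat (replicate (Suc n) y) = concat (replicate n y) @ y"
  by (simp flip: replicate_append_same)

lemma card_UNIV_gt_0 [simp]: "0 < card (UNIV :: 'q::finite set)"
  by (rule finite_UNIV_card_ge_0) simp

locale stochastic_automaton =
  fixes Delta :: "'q::finite \<Rightarrow> 'a::finite \<Rightarrow> 'q \<Rightarrow> real"
  assumes stochastic: "stochastic Delta"
begin

lemma Delta_nonneg: "0 \<le> Delta s a t"
  using stochastic unfolding stochastic_def by blast

lemma Delta_row_sum: "(\<Sum>t\<in>UNIV. Delta s a t) = 1"
  using stochastic unfolding stochastic_def by blast

lemma prob_nonneg: "0 \<le> prob Delta s xs t"
  by (induction xs arbitrary: s) (auto intro!: sum_nonneg mult_nonneg_nonneg Delta_nonneg)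

lemma prob_row_sum: "(\<Sum>t\<in>UNIV. prob Delta s xs t) = 1"
proof (induction xs arbitrary: s)
  case (Cons a xs)
  have "(\<Sum>t\<in>UNIV. prob Delta s (a # xs) t)
      = (\<Sum>t\<in>UNIV. \<Sum>q\<in>UNIV. Delta s a q * prob Delta q xs t)"
    by simp
  also have "\<dots> = (\<Sum>q\<in>UNIV. Delta s a q * (\<Sum>t\<in>UNIV. prob Delta q xs t))"
    by (subst sum.swap) (simp add: sum_distrib_left)
  finally show ?case
    using Cons by (simp add: Delta_row_sum)
qed simp

lemma prob_le_1: "prob Delta s xs t \<le> 1"
  using member_le_sum[of t UNIV "prob Delta s xs"] by (simp add: prob_nonneg prob_row_sum)

lemma prob_set_nonneg: "0 \<le> prob_set Delta s xs S"
  unfolding prob_set_def by (simp add: sum_nonneg prob_nonneg)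

lemma prob_set_add_compl: "prob_set Delta s xs S + prob_set Delta s xs (- S) = 1"
  using sum.subset_diff[of S UNIV "prob Delta s xs"]
  by (simp add: prob_set_def prob_row_sum Compl_eq_Diff_UNIV)

lemma prob_set_le_1: "prob_set Delta s xs S \<le> 1"
  using prob_set_add_compl[of s xs S] prob_set_nonneg[of s xs "- S"] by linarith

lemma prob_le_prob_set: "t \<in> S \<Longrightarrow> prob Delta s xs t \<le> prob_set Delta s xs S"
  unfolding prob_set_def by (rule member_le_sum) (auto simp: prob_nonneg)

lemma prob_set_le_card:
  assumes "\<And>t. t \<in> S \<Longrightarrow> prob Delta s xs t \<le> e" and "0 \<le> e"
  shows "prob_set Delta s xs S \<le> real (card (UNIV :: 'q set)) * e"
proof -
  have "prob_set Delta s xs S \<le> real (card S) * e"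
    unfolding prob_set_def using assms(1) by (rule sum_bounded_above)
  also have "\<dots> \<le> real (card (UNIV :: 'q set)) * e"
    using assms(2) by (intro mult_right_mono) (auto intro: card_mono)
  finally show ?thesis .
qed

lemma prob_mult_le_prob_append: "prob Delta s xs q * prob Delta q ys t \<le> prob Delta s (xs @ ys) t"
  unfolding prob_append by (rule member_le_sum) (auto intro: mult_nonneg_nonneg prob_nonneg)

lemma prob_append_le:
  assumes "\<And>q. prob Delta q ys t \<le> e"
  shows "prob Delta s (xs @ ys) t \<le> e"
proof -
  have "prob Delta s (xs @ ys) t \<le> (\<Sum>q\<in>UNIV. prob Delta s xs q * e)"
    unfolding prob_append by (intro sum_mono mult_left_mono assms prob_nonneg)
  also have "\<dots> = e"
    by (simp add: prob_row_sum flip: sum_distrib_right)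
  finally show ?thesis .
qed

lemma prob_set_mult_le_prob_append:
  assumes "\<And>q. q \<in> S \<Longrightarrow> d \<le> prob Delta q ys t"
  shows "d * prob_set Delta s xs S \<le> prob Delta s (xs @ ys) t"
proof -
  have "d * prob_set Delta s xs S = (\<Sum>q\<in>S. prob Delta s xs q * d)"
    unfolding prob_set_def by (simp add: sum_distrib_left mult.commute)
  also have "\<dots> \<le> (\<Sum>q\<in>S. prob Delta s xs q * prob Delta q ys t)"
    by (intro sum_mono mult_left_mono assms prob_nonneg)
  also have "\<dots> \<le> (\<Sum>q\<in>UNIV. prob Delta s xs q * prob Delta q ys t)"
    by (rule sum_mono2) (auto intro: mult_nonneg_nonneg prob_nonneg)
  finally show ?thesis
    by (simp add: prob_append)
qed

end

section \<open>Idempotent limit-words\<close>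

lemma idempotent_lw_trans:
  assumes "idempotent_lw x" and "x s q" and "x q t"
  shows "x s t"
proof -
  have "lw_concat x x s t"
    using assms(2,3) unfolding lw_concat_def by blast
  with assms(1) show ?thesis
    unfolding idempotent_lw_def by simp
qed

lemma idempotent_lw_split:
  assumes "idempotent_lw x" and "x s t"
  obtains q where "x s q" and "x q t"
proof -
  have "lw_concat x x s t"
    using assms by (simp add: idempotent_lw_def)
  then show thesis
    using that unfolding lw_concat_def by blast
qed

lemma idempotent_lw_successors_closed:
  assumes "idempotent_lw x"
  shows "\<forall>q\<in>{q. x s q}. \<forall>q'. x q q' \<longrightarrow> q' \<in> {q. x s q}"
  using idempotent_lw_trans[OF assms, of s] by blast

lemma recurrent_successor:
  assumes idem: "idempotent_lw x" and "recurrent x r" and "x r q"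
  shows "recurrent x q"
  unfolding recurrent_def
proof (intro allI impI)
  fix t
  assume "x q t"
  have "x r t"
    using idem \<open>x r q\<close> \<open>x q t\<close> by (rule idempotent_lw_trans)
  then have "x t r"
    using \<open>recurrent x r\<close> unfolding recurrent_def by blast
  then show "x t q"
    using \<open>x r q\<close> by (rule idempotent_lw_trans[OF idem])
qed

lemma recurrent_self_loop:
  assumes "idempotent_lw x" and "is_limit_word x" and "recurrent x r"
  shows "x r r"
proof -
  obtain t where "x r t"
    using \<open>is_limit_word x\<close> unfolding is_limit_word_def by blast
  with assms show ?thesis
    using idempotent_lw_trans[of x r t r] unfolding recurrent_def by blast
qed

text \<open>A successor q of s with fewest successors shares, by idempotency, its successor set with all
  of its successors, which are therefore recurrent.\<close>
lemma recurrent_reachable: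
  fixes x :: "'q::finite lword"
  assumes idem: "idempotent_lw x" and "is_limit_word x"
  obtains r where "x s r" and "recurrent x r"
proof -
  let ?succ = "\<lambda>q. {t. x q t}"
  obtain q0 where "x s q0"
    using \<open>is_limit_word x\<close> unfolding is_limit_word_def by blast
  then obtain q where sq: "x s q" and q_min: "\<And>q'. x s q' \<Longrightarrow> card (?succ q) \<le> card (?succ q')"
    using ex_has_least_nat[of "x s" q0 "\<lambda>q. card (?succ q)"] by blast
  have succ_eq: "?succ q' = ?succ q" if "x q q'" for q'
  proof (rule card_subset_eq)
    show "?succ q' \<subseteq> ?succ q"
      using idempotent_lw_trans[OF idem that] by blast
    then show "card (?succ q') = card (?succ q)"
      using q_min[OF idempotent_lw_trans[OF idem sq that]] by (simp add: le_antisym card_mono)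
  qed simp
  obtain r where qr: "x q r"
    using \<open>is_limit_word x\<close> unfolding is_limit_word_def by blast
  have "recurrent x r"
    unfolding recurrent_def using succ_eq qr by blast
  with idempotent_lw_trans[OF idem sq qr] show thesis ..
qed

text \<open>The same minimality argument, restricted to the states lying between q and t.\<close>
lemma transient_self_loop:
  fixes v :: "'q::finite lword"
  assumes idem: "idempotent_lw v" and "v q t" and "transient v t"
  obtains t' where "v q t'" and "v t' t'" and "transient v t'"
proof -
  let ?B = "{b. v q b \<and> v b t}"
  let ?succ = "\<lambda>b. {c \<in> ?B. v b c}"
  have succ_nonempty: "\<exists>c. c \<in> ?succ b" if "b \<in> ?B" for b
  proof -
    from that obtain c where "v b c" and "v c t"
      using idempotent_lw_split[OF idem] by blast
    moreover have "v q c"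
      using idem _ \<open>v b c\<close> by (rule idempotent_lw_trans) (use that in blast)
    ultimately show ?thesis
      by blast
  qed
  obtain b0 where "b0 \<in> ?B"
    using idempotent_lw_split[OF idem \<open>v q t\<close>] by blast
  then obtain a where a: "a \<in> ?B" and a_min: "\<And>b. b \<in> ?B \<Longrightarrow> card (?succ a) \<le> card (?succ b)"
    using ex_has_least_nat[of "\<lambda>b. b \<in> ?B" b0 "\<lambda>b. card (?succ b)"] by blast
  have succ_eq: "?succ c = ?succ a" if "c \<in> ?succ a" for c
  proof (rule card_subset_eq)
    show "?succ c \<subseteq> ?succ a"
      using idempotent_lw_trans[OF idem, of a c] that by blast
    then show "card (?succ c) = card (?succ a)"
      using a_min[of c] that by (simp add: le_antisym card_mono)
  qed simp
  obtain c where c: "c \<in> ?succ a"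
    using succ_nonempty[OF a] by blast
  then have "v q c" "v c c" "v c t"
    using succ_eq[OF c] by auto
  moreover have "transient v c"
    using \<open>transient v t\<close> recurrent_successor[OF idem _ \<open>v c t\<close>] unfolding transient_def by blast
  ultimately show thesis
    using that by simp
qed

section \<open>Realizability of the Markov monoid\<close>

context stochastic_automaton
begin

definition realizes :: "'q lword \<Rightarrow> 'a list \<Rightarrow> real \<Rightarrow> real \<Rightarrow> bool" where
  "realizes x y d e \<longleftrightarrow>
     (\<forall>s t. x s t \<longrightarrow> d \<le> prob Delta s y t) \<and> (\<forall>s t. \<not> x s t \<longrightarrow> prob Delta s y t \<le> e)"

definition realizable :: "'q lword \<Rightarrow> real \<Rightarrow> bool" where
  "realizable x d \<longleftrightarrow> (\<forall>e>0. \<exists>y. realizes x y d e)"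

lemma realizes_mono: "realizes x y d e \<Longrightarrow> e \<le> e' \<Longrightarrow> realizes x y d e'"
  unfolding realizes_def by force

lemma realizes_is_limit_word:
  assumes "realizes x y d e" and "real (card (UNIV :: 'q set)) * e < 1"
  shows "is_limit_word x"
  unfolding is_limit_word_def
proof
  fix s
  show "\<exists>t. x s t"
  proof (rule ccontr)
    assume "\<nexists>t. x s t"
    then have "(\<Sum>t\<in>UNIV. prob Delta s y t) \<le> real (card (UNIV :: 'q set)) * e"
      using assms(1) unfolding realizes_def by (intro sum_bounded_above) auto
    with assms(2) show False
      by (simp add: prob_row_sum)
  qed
qed

lemma realizable_is_limit_word:
  assumes "realizable x d"
  shows "is_limit_word x"
proof -
  let ?e = "1 / (2 * real (card (UNIV :: 'q set)))"
  obtain y where "realizes x y d ?e"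
    using assms unfolding realizable_def by fastforce
  then show ?thesis
    by (rule realizes_is_limit_word) simp
qed

lemma realizable_le_1:
  assumes "realizable x d"
  shows "d \<le> 1"
proof -
  obtain s t where "x s t"
    using realizable_is_limit_word[OF assms] unfolding is_limit_word_def by blast
  moreover obtain y where "realizes x y d 1"
    using assms unfolding realizable_def by fastforce
  ultimately show ?thesis
    using prob_le_1[of s y t] unfolding realizes_def by force
qed

lemma realizes_concat:
  assumes x1: "realizes x1 y1 d1 e1" and x2: "realizes x2 y2 d2 e2"
    and "0 \<le> d2" and "0 \<le> e1" and "0 \<le> e2"
  shows "realizes (lw_concat x1 x2) (y1 @ y2) (d1 * d2) (real (card (UNIV :: 'q set)) * (e1 + e2))"
  unfolding realizes_def
proof (intro conjI allI impI)
  fix s t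
  assume "lw_concat x1 x2 s t"
  then obtain q where "x1 s q" and "x2 q t"
    unfolding lw_concat_def by blast
  then have "d1 * d2 \<le> prob Delta s y1 q * prob Delta q y2 t"
    using x1 x2 \<open>0 \<le> d2\<close> unfolding realizes_def by (intro mult_mono) (auto simp: prob_nonneg)
  also have "\<dots> \<le> prob Delta s (y1 @ y2) t"
    by (rule prob_mult_le_prob_append)
  finally show "d1 * d2 \<le> prob Delta s (y1 @ y2) t" .
next
  fix s t
  assume not_st: "\<not> lw_concat x1 x2 s t"
  have "prob Delta s y1 q * prob Delta q y2 t \<le> e1 + e2" for q
  proof (cases "x1 s q")
    case True
    with not_st have "prob Delta q y2 t \<le> e2"
      using x2 unfolding realizes_def lw_concat_def by blast
    moreover have "prob Delta s y1 q * prob Delta q y2 t \<le> 1 * prob Delta q y2 t"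
      by (intro mult_right_mono prob_le_1 prob_nonneg)
    ultimately show ?thesis
      using \<open>0 \<le> e1\<close> by linarith
  next
    case False
    then have "prob Delta s y1 q \<le> e1"
      using x1 unfolding realizes_def by blast
    moreover have "prob Delta s y1 q * prob Delta q y2 t \<le> prob Delta s y1 q * 1"
      by (intro mult_left_mono prob_le_1 prob_nonneg)
    ultimately show ?thesis
      using \<open>0 \<le> e2\<close> by linarith
  qed
  then have "(\<Sum>q\<in>UNIV. prob Delta s y1 q * prob Delta q y2 t)
      \<le> real (card (UNIV :: 'q set)) * (e1 + e2)"
    by (intro sum_bounded_above)
  then show "prob Delta s (y1 @ y2) t \<le> real (card (UNIV :: 'q set)) * (e1 + e2)"
    by (simp add: prob_append)
qed

lemma realizable_concat:
  assumes "realizable x1 d1" and "realizable x2 d2" and "0 < d2"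
  shows "realizable (lw_concat x1 x2) (d1 * d2)"
  unfolding realizable_def
proof (intro allI impI)
  fix e :: real
  assume "0 < e"
  define e' where "e' = e / (2 * real (card (UNIV :: 'q set)))"
  have "0 < e'"
    using \<open>0 < e\<close> by (simp add: e'_def)
  then obtain y1 y2 where "realizes x1 y1 d1 e'" and "realizes x2 y2 d2 e'"
    using assms unfolding realizable_def by blast
  then have "realizes (lw_concat x1 x2) (y1 @ y2) (d1 * d2) (real (card (UNIV :: 'q set)) * (e' + e'))"
    using \<open>0 < d2\<close> \<open>0 < e'\<close> by (intro realizes_concat) auto
  moreover have "real (card (UNIV :: 'q set)) * (e' + e') = e"
    by (simp add: e'_def)
  ultimately show "\<exists>y. realizes (lw_concat x1 x2) y (d1 * d2) e"
    by auto
qed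

lemma realizable_one: "realizable one_lw 1"
  unfolding realizable_def realizes_def one_lw_def by (auto intro!: exI[of _ "[]"])

lemma realizable_letter: "\<exists>d>0. realizable (letter_lw Delta a) d"
proof -
  define P where "P = insert 1 {Delta s a t | s t. 0 < Delta s a t}"
  have "finite P"
  proof -
    have "{Delta s a t | s t. 0 < Delta s a t} \<subseteq> (\<lambda>(s, t). Delta s a t) ` UNIV"
      by auto
    then show ?thesis
      unfolding P_def by (simp add: finite_subset)
  qed
  have "Min P \<in> P"
    using \<open>finite P\<close> by (rule Min_in) (simp add: P_def)
  then have "0 < Min P"
    unfolding P_def by auto
  moreover have "Min P \<le> Delta s a t" if "0 < Delta s a t" for s t
    using \<open>finite P\<close> by (rule Min_le) (use that in \<open>auto simp: P_def\<close>)
  then have "realizes (letter_lw Delta a) [a] (Min P) e" if "0 < e" for e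
    unfolding realizes_def letter_lw_def prob_singleton
    using that Delta_nonneg[of _ a] by (auto simp: not_less)
  ultimately show ?thesis
    unfolding realizable_def by blast
qed

lemma prob_set_closed_append:
  assumes closed: "\<forall>q\<in>S. \<forall>q'. x q q' \<longrightarrow> q' \<in> S"
    and y: "realizes x y d e" and "0 \<le> e"
  shows "prob_set Delta s xs S - real (card (UNIV :: 'q set)) * e \<le> prob_set Delta s (xs @ y) S"
proof -
  let ?C = "real (card (UNIV :: 'q set))"
  have stay: "1 - ?C * e \<le> prob_set Delta q y S" if "q \<in> S" for q
  proof -
    have "\<not> x q t" if "t \<in> - S" for t
      using closed \<open>q \<in> S\<close> that by blast
    then have "prob_set Delta q y (- S) \<le> ?C * e"
      using y \<open>0 \<le> e\<close> unfolding realizes_def by (intro prob_set_le_card) auto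
    then show ?thesis
      using prob_set_add_compl[of q y S] by linarith
  qed
  have "prob_set Delta s xs S - ?C * e \<le> prob_set Delta s xs S * (1 - ?C * e)"
    using mult_right_mono[OF prob_set_le_1, of "?C * e" s xs S] \<open>0 \<le> e\<close>
    by (simp add: algebra_simps)
  also have "\<dots> = (\<Sum>q\<in>S. prob Delta s xs q * (1 - ?C * e))"
    unfolding prob_set_def by (simp add: sum_distrib_right)
  also have "\<dots> \<le> (\<Sum>q\<in>S. prob Delta s xs q * prob_set Delta q y S)"
    by (intro sum_mono mult_left_mono stay prob_nonneg)
  also have "\<dots> \<le> (\<Sum>q\<in>UNIV. prob Delta s xs q * prob_set Delta q y S)"
    by (rule sum_mono2) (auto intro: mult_nonneg_nonneg prob_nonneg prob_set_nonneg)
  finally show ?thesis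
    by (simp add: prob_set_append)
qed

lemma prob_set_closed_blocks:
  assumes closed: "\<forall>q\<in>S. \<forall>q'. x q q' \<longrightarrow> q' \<in> S"
    and blocks: "\<And>j. realizes x (B j) d (e j)" and "\<And>j. 0 \<le> e j"
  shows "prob_set Delta s xs S - real (card (UNIV :: 'q set)) * (\<Sum>j<n. e j)
    \<le> prob_set Delta s (xs @ concat (map B [0..<n])) S"
proof (induction n)
  case (Suc n)
  have "prob_set Delta s (xs @ concat (map B [0..<n])) S - real (card (UNIV :: 'q set)) * e n
      \<le> prob_set Delta s ((xs @ concat (map B [0..<n])) @ B n) S"
    using closed blocks assms(3) by (rule prob_set_closed_append)
  with Suc show ?case
    by (simp add: algebra_simps)
qed simp

lemma prob_set_closed_power:
  assumes "\<forall>q\<in>S. \<forall>q'. x q q' \<longrightarrow> q' \<in> S" and "realizes x y d e" and "0 \<le> e"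
  shows "prob_set Delta s xs S - real n * real (card (UNIV :: 'q set)) * e
    \<le> prob_set Delta s (xs @ concat (replicate n y)) S"
  using prob_set_closed_blocks[of S x "\<lambda>_. y" d "\<lambda>_. e" s xs n] assms
  by (simp add: map_replicate_const mult_ac)

lemma prob_set_successors_ge:
  assumes "realizes x y d e" and "0 \<le> e"
  shows "1 - real (card (UNIV :: 'q set)) * e \<le> prob_set Delta s y {q. x s q}"
proof -
  have "prob_set Delta s y (- {q. x s q}) \<le> real (card (UNIV :: 'q set)) * e"
    using assms unfolding realizes_def by (intro prob_set_le_card) auto
  then show ?thesis
    using prob_set_add_compl[of s y "{q. x s q}"] by linarith
qed

text \<open>From a transient state, one application of y loses the mass d into a recurrent state; from a
  recurrent state, transient states are reached with probability at most the error.\<close>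
lemma prob_set_transient_append:
  assumes idem: "idempotent_lw x" and "is_limit_word x" and y: "realizes x y d e" and "0 \<le> e"
  defines "T \<equiv> {q. transient x q}"
  shows "prob_set Delta s (xs @ y) T
    \<le> (1 - d) * prob_set Delta s xs T + real (card (UNIV :: 'q set)) * e"
proof -
  let ?C = "real (card (UNIV :: 'q set))" and ?P = "prob Delta s xs"
  have from_transient: "prob_set Delta q y T \<le> 1 - d" if "q \<in> T" for q
  proof -
    obtain r where "x q r" and "recurrent x r"
      using recurrent_reachable[OF idem \<open>is_limit_word x\<close>] by blast
    then have "T \<subseteq> - {r}" and "d \<le> prob_set Delta q y {r}"
      using y unfolding T_def transient_def realizes_def prob_set_def by auto
    moreover from \<open>T \<subseteq> - {r}\<close> have "prob_set Delta q y T \<le> prob_set Delta q y (- {r})"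
      unfolding prob_set_def by (intro sum_mono2) (auto simp: prob_nonneg)
    ultimately show ?thesis
      using prob_set_add_compl[of q y "{r}"] by linarith
  qed
  have from_recurrent: "prob_set Delta q y T \<le> ?C * e" if "q \<notin> T" for q
  proof (rule prob_set_le_card)
    fix t
    assume "t \<in> T"
    with that have "\<not> x q t"
      using recurrent_successor[OF idem] unfolding T_def transient_def by blast
    then show "prob Delta q y t \<le> e"
      using y unfolding realizes_def by blast
  qed fact
  have "prob_set Delta s (xs @ y) T
      = (\<Sum>q\<in>T. ?P q * prob_set Delta q y T) + (\<Sum>q\<in>-T. ?P q * prob_set Delta q y T)"
    unfolding prob_set_append using sum.subset_diff[of T UNIV]
    by (simp add: Compl_eq_Diff_UNIV add.commute)
  also have "\<dots> \<le> (\<Sum>q\<in>T. ?P q * (1 - d)) + (\<Sum>q\<in>-T. ?P q * (?C * e))"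
    using from_transient from_recurrent by (intro add_mono sum_mono mult_left_mono prob_nonneg) auto
  also have "\<dots> = (1 - d) * prob_set Delta s xs T + prob_set Delta s xs (- T) * (?C * e)"
    unfolding prob_set_def by (simp add: sum_distrib_left sum_distrib_right mult.commute)
  also have "\<dots> \<le> (1 - d) * prob_set Delta s xs T + ?C * e"
    using mult_right_mono[OF prob_set_le_1, of "?C * e" s xs "- T"] \<open>0 \<le> e\<close> by simp
  finally show ?thesis .
qed

lemma prob_set_transient_power:
  assumes "idempotent_lw x" and "is_limit_word x" and "realizes x y d e" and "0 \<le> e"
    and "0 < d" and "d \<le> 1"
  shows "prob_set Delta s (concat (replicate n y)) {q. transient x q}
    \<le> (1 - d) ^ n + real (card (UNIV :: 'q set)) * e / d"
proof (induction n)
  case 0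
  have "0 \<le> real (card (UNIV :: 'q set)) * e / d"
    using \<open>0 \<le> e\<close> \<open>0 < d\<close> by simp
  then show ?case
    using prob_set_le_1[of s "[]" "{q. transient x q}"] by simp
next
  case (Suc n)
  let ?C = "real (card (UNIV :: 'q set))"
  have "prob_set Delta s (concat (replicate (Suc n) y)) {q. transient x q}
      \<le> (1 - d) * prob_set Delta s (concat (replicate n y)) {q. transient x q} + ?C * e"
    unfolding concat_replicate_Suc_snoc using assms(1-4) by (rule prob_set_transient_append)
  also have "\<dots> \<le> (1 - d) * ((1 - d) ^ n + ?C * e / d) + ?C * e"
    using Suc \<open>d \<le> 1\<close> by (intro add_right_mono mult_left_mono) auto
  also have "\<dots> = (1 - d) ^ Suc n + ?C * e / d"
    using \<open>0 < d\<close> by (simp add: field_simps)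
  finally show ?case .
qed

text \<open>Starting towards a recurrent t, the mass stays among the successors of t, and each of them
  moves to t with probability at least d.\<close>
lemma prob_power_sharp_ge:
  assumes idem: "idempotent_lw x" and "is_limit_word x" and y: "realizes x y d e"
    and "0 \<le> d" and "0 \<le> e" and "sharp x s t"
  shows "d * (d - real n * real (card (UNIV :: 'q set)) * e)
    \<le> prob Delta s (concat (replicate (n + 2) y)) t"
proof -
  let ?S = "{q. x t q}"
  have "x s t" and "recurrent x t"
    using \<open>sharp x s t\<close> unfolding sharp_def by auto
  have closed: "\<forall>q\<in>?S. \<forall>q'. x q q' \<longrightarrow> q' \<in> ?S"
    by (rule idempotent_lw_successors_closed[OF idem])
  have "t \<in> ?S"
    using recurrent_self_loop[OF idem \<open>is_limit_word x\<close> \<open>recurrent x t\<close>] by simp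
  then have "d \<le> prob_set Delta s y ?S"
    using y \<open>x s t\<close> prob_le_prob_set[of t ?S s y] unfolding realizes_def by force
  then have "d - real n * real (card (UNIV :: 'q set)) * e
      \<le> prob_set Delta s (y @ concat (replicate n y)) ?S"
    using prob_set_closed_power[OF closed y \<open>0 \<le> e\<close>, where s = s and xs = y and n = n] by linarith
  then have "d * (d - real n * real (card (UNIV :: 'q set)) * e)
      \<le> d * prob_set Delta s (y @ concat (replicate n y)) ?S"
    using \<open>0 \<le> d\<close> by (rule mult_left_mono)
  also have "\<dots> \<le> prob Delta s ((y @ concat (replicate n y)) @ y) t"
    using \<open>recurrent x t\<close> y unfolding recurrent_def realizes_def
    by (intro prob_set_mult_le_prob_append) blast
  also have "(y @ concat (replicate n y)) @ y = concat (replicate (n + 2) y)"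
    using concat_replicate_Suc_snoc[of n y] by simp
  finally show ?thesis .
qed

lemma prob_power_not_successor_le:
  assumes idem: "idempotent_lw x" and y: "realizes x y d e" and "0 \<le> e" and "\<not> x s t"
  shows "prob Delta s (concat (replicate (Suc n) y)) t
    \<le> real (Suc n) * real (card (UNIV :: 'q set)) * e"
proof -
  let ?S = "{q. x s q}" and ?C = "real (card (UNIV :: 'q set))"
  have closed: "\<forall>q\<in>?S. \<forall>q'. x q q' \<longrightarrow> q' \<in> ?S"
    by (rule idempotent_lw_successors_closed[OF idem])
  have "1 - ?C * e - real n * ?C * e \<le> prob_set Delta s (y @ concat (replicate n y)) ?S"
    using prob_set_successors_ge[OF y \<open>0 \<le> e\<close>, of s]
      prob_set_closed_power[OF closed y \<open>0 \<le> e\<close>, where s = s and xs = y and n = n] by linarith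
  moreover have "prob Delta s (y @ concat (replicate n y)) t
      \<le> prob_set Delta s (y @ concat (replicate n y)) (- ?S)"
    using \<open>\<not> x s t\<close> by (intro prob_le_prob_set) simp
  ultimately show ?thesis
    using prob_set_add_compl[of s "y @ concat (replicate n y)" ?S] by (simp add: algebra_simps)
qed

lemma realizes_sharp_power:
  assumes idem: "idempotent_lw x" and "is_limit_word x" and y: "realizes x y d e"
    and "0 < d" and "d \<le> 1" and "0 \<le> e" and "e' \<le> 1"
    and decay: "(1 - d) ^ n \<le> e' / 2"
    and error: "real (n + 2) * real (card (UNIV :: 'q set)) * e \<le> e' * d / 2"
  shows "realizes (sharp x) (concat (replicate (n + 2) y)) (d * d / 2) e'"
  unfolding realizes_def
proof (intro conjI allI impI)
  let ?C = "real (card (UNIV :: 'q set))"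
  have "0 \<le> e'"
    using decay zero_le_power[of "1 - d" n] \<open>d \<le> 1\<close> by linarith
  have "e' * d \<le> 1 * d" and "e' * d \<le> e' * 1"
    using \<open>0 < d\<close> \<open>d \<le> 1\<close> \<open>0 \<le> e'\<close> \<open>e' \<le> 1\<close> by (intro mult_mono; simp)+
  have "?C * e \<le> real (n + 2) * ?C * e"
    using \<open>0 \<le> e\<close> mult_right_mono[of 1 "real (n + 2)" "?C * e"] by (simp add: mult.assoc)
  fix s t
  {
    assume "sharp x s t"
    have "real n * ?C * e \<le> real (n + 2) * ?C * e"
      using \<open>0 \<le> e\<close> by (intro mult_right_mono) auto
    with error \<open>e' * d \<le> 1 * d\<close> have "d / 2 \<le> d - real n * ?C * e"
      by linarith
    then have "d * d / 2 \<le> d * (d - real n * ?C * e)"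
      using \<open>0 < d\<close> by (metis mult_left_mono less_imp_le times_divide_eq_right)
    also have "\<dots> \<le> prob Delta s (concat (replicate (n + 2) y)) t"
      using idem \<open>is_limit_word x\<close> y \<open>0 < d\<close> \<open>0 \<le> e\<close> \<open>sharp x s t\<close>
      by (intro prob_power_sharp_ge) auto
    finally show "d * d / 2 \<le> prob Delta s (concat (replicate (n + 2) y)) t" .
  }
  assume "\<not> sharp x s t"
  then consider "\<not> x s t" | "transient x t"
    unfolding sharp_def transient_def by blast
  then show "prob Delta s (concat (replicate (n + 2) y)) t \<le> e'"
  proof cases
    case 1
    have "prob Delta s (concat (replicate (Suc (n + 1)) y)) t \<le> real (Suc (n + 1)) * ?C * e"
      using idem y \<open>0 \<le> e\<close> 1 by (rule prob_power_not_successor_le)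
    also have "\<dots> = real (n + 2) * ?C * e"
      by simp
    also have "\<dots> \<le> e'"
      using error \<open>e' * d \<le> e' * 1\<close> \<open>0 \<le> e'\<close> by linarith
    finally show ?thesis
      by simp
  next
    case 2
    have "prob Delta s (concat (replicate (n + 2) y)) t
        \<le> prob_set Delta s (concat (replicate (n + 2) y)) {q. transient x q}"
      using 2 by (intro prob_le_prob_set) simp
    also have "\<dots> \<le> (1 - d) ^ (n + 2) + ?C * e / d"
      using idem \<open>is_limit_word x\<close> y \<open>0 \<le> e\<close> \<open>0 < d\<close> \<open>d \<le> 1\<close>
      by (rule prob_set_transient_power)
    also have "(1 - d) ^ (n + 2) \<le> (1 - d) ^ n"
      using \<open>0 < d\<close> \<open>d \<le> 1\<close> by (intro power_decreasing) auto
    also have "?C * e / d \<le> (e' * d / 2) / d"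
    proof (rule divide_right_mono)
      show "?C * e \<le> e' * d / 2"
        using \<open>?C * e \<le> real (n + 2) * ?C * e\<close> error by linarith
    qed (use \<open>0 < d\<close> in simp)
    also have "\<dots> = e' / 2"
      using \<open>0 < d\<close> by simp
    finally show ?thesis
      using decay by simp
  qed
qed

lemma realizable_sharp_powers:
  assumes idem: "idempotent_lw x" and x: "realizable x d" and "0 < d"
  shows "\<exists>d'>0. \<forall>e>0. \<exists>y k.
    1 \<le> k \<and> realizes x y d e \<and> realizes (sharp x) (concat (replicate k y)) d' e"
proof (intro exI[of _ "d * d / 2"] conjI allI impI)
  let ?C = "real (card (UNIV :: 'q set))"
  show "0 < d * d / 2"
    using \<open>0 < d\<close> by simp
  fix e :: real
  assume "0 < e"
  have "is_limit_word x" and "d \<le> 1"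
    using realizable_is_limit_word[OF x] realizable_le_1[OF x] .
  define e' where "e' = min e 1"
  have "0 < e'" "e' \<le> e" "e' \<le> 1"
    using \<open>0 < e\<close> by (auto simp: e'_def)
  obtain n where n: "(1 - d) ^ n < e' / 2"
    using real_arch_pow_inv[of "e' / 2" "1 - d"] \<open>0 < e'\<close> \<open>0 < d\<close> by auto
  have "1 \<le> real (n + 2) * ?C"
    using mult_mono[of 1 "real (n + 2)" 1 ?C] by (simp add: Suc_le_eq)
  define e0 where "e0 = e' * d / 2 / (real (n + 2) * ?C)"
  have "0 < e0"
    using \<open>0 < e'\<close> \<open>0 < d\<close> \<open>1 \<le> real (n + 2) * ?C\<close> by (simp add: e0_def)
  have error: "real (n + 2) * ?C * e0 = e' * d / 2"
    using \<open>1 \<le> real (n + 2) * ?C\<close> unfolding e0_def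
    by (metis nonzero_mult_div_cancel_left times_divide_eq_right not_one_le_zero)
  have "e0 \<le> e' * d / 2"
  proof -
    have "e' * d / 2 * 1 \<le> e' * d / 2 * (real (n + 2) * ?C)"
      using \<open>1 \<le> real (n + 2) * ?C\<close> \<open>0 < e'\<close> \<open>0 < d\<close> by (intro mult_left_mono) auto
    then show ?thesis
      using \<open>1 \<le> real (n + 2) * ?C\<close> unfolding e0_def by (simp add: pos_divide_le_eq)
  qed
  also have "\<dots> \<le> e"
    using \<open>0 < e'\<close> \<open>e' \<le> e\<close> \<open>d \<le> 1\<close> mult_left_mono[of d 1 e'] by linarith
  finally have "e0 \<le> e" .
  obtain y where y: "realizes x y d e0"
    using x \<open>0 < e0\<close> unfolding realizable_def by blast
  have "realizes (sharp x) (concat (replicate (n + 2) y)) (d * d / 2) e'"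
    using idem \<open>is_limit_word x\<close> y \<open>0 < d\<close> \<open>d \<le> 1\<close> \<open>0 < e0\<close> \<open>e' \<le> 1\<close> n error
    by (intro realizes_sharp_power) auto
  then have "realizes (sharp x) (concat (replicate (n + 2) y)) (d * d / 2) e"
    using \<open>e' \<le> e\<close> by (rule realizes_mono)
  moreover have "realizes x y d e"
    using y \<open>e0 \<le> e\<close> by (rule realizes_mono)
  ultimately show "\<exists>y k. 1 \<le> k \<and> realizes x y d e
      \<and> realizes (sharp x) (concat (replicate k y)) (d * d / 2) e"
    by (intro exI[of _ y] exI[of _ "n + 2"]) simp
qed

lemma realizable_markov_monoid:
  assumes "x \<in> markov_monoid Delta"
  shows "\<exists>d>0. realizable x d"
  using assms
proof (induction rule: markov_monoid.induct)
  case (letter a)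
  show ?case
    by (rule realizable_letter)
next
  case one
  show ?case
    using realizable_one by (intro exI[of _ 1]) simp
next
  case (concat x1 x2)
  then obtain d1 d2 where "0 < d1" "realizable x1 d1" "0 < d2" "realizable x2 d2"
    by blast
  then have "realizable (lw_concat x1 x2) (d1 * d2)"
    by (intro realizable_concat)
  with \<open>0 < d1\<close> \<open>0 < d2\<close> show ?case
    by (intro exI[of _ "d1 * d2"]) simp
next
  case (iter x)
  then obtain d where "0 < d" and "realizable x d"
    by blast
  then obtain d' where "0 < d'"
    and "\<forall>e>0. \<exists>y k.
      1 \<le> k \<and> realizes x y d e \<and> realizes (sharp x) (concat (replicate k y)) d' e"
    using realizable_sharp_powers[OF \<open>idempotent_lw x\<close>] by blast
  then have "realizable (sharp x) d'"
    unfolding realizable_def by blast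
  with \<open>0 < d'\<close> show ?case
    by blast
qed

end

section \<open>Oscillating processes\<close>

definition oscillates :: "('q::finite \<Rightarrow> 'a \<Rightarrow> 'q \<Rightarrow> real) \<Rightarrow> (nat \<Rightarrow> 'a) \<Rightarrow> 'q \<Rightarrow> 'q \<Rightarrow> bool" where
  "oscillates Delta w p t \<longleftrightarrow> (\<forall>lam>0. \<exists>c>0. \<forall>N. \<exists>m\<ge>N.
     c \<le> prob Delta p (prefix_word w m) t \<and> prob Delta p (prefix_word w m) t < lam)"

context stochastic_automaton
begin

lemma oscillates_not_simple_process:
  assumes "oscillates Delta w p t"
  shows "\<not> simple_process Delta w p"
proof
  assume "simple_process Delta w p"
  then obtain lam and A B :: "nat \<Rightarrow> 'q set" where "0 < lam"
    and partition: "\<And>k. A k \<inter> B k = {} \<and> A k \<union> B k = UNIV"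
    and large: "\<And>k q. q \<in> A k \<Longrightarrow> lam \<le> prob Delta p (prefix_word w k) q"
    and small: "(\<lambda>n. prob_set Delta p (prefix_word w n) (B n)) \<longlonglongrightarrow> 0"
    unfolding simple_process_def by blast
  obtain c where "0 < c" and osc: "\<And>N. \<exists>m\<ge>N.
      c \<le> prob Delta p (prefix_word w m) t \<and> prob Delta p (prefix_word w m) t < lam"
    using assms \<open>0 < lam\<close> unfolding oscillates_def by blast
  obtain N where N: "\<And>m. N \<le> m \<Longrightarrow> prob_set Delta p (prefix_word w m) (B m) < c"
    using LIMSEQ_D[OF small \<open>0 < c\<close>] by (auto simp: abs_less_iff)
  obtain m where "N \<le> m" and "c \<le> prob Delta p (prefix_word w m) t"
    and "prob Delta p (prefix_word w m) t < lam"
    using osc by blast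
  then have "t \<notin> A m"
    using large[of t m] by force
  then have "t \<in> B m"
    using partition[of m] by blast
  then have "c \<le> prob_set Delta p (prefix_word w m) (B m)"
    using \<open>c \<le> prob Delta p (prefix_word w m) t\<close> prob_le_prob_set[of t "B m" p "prefix_word w m"]
    by linarith
  with N[OF \<open>N \<le> m\<close>] show False
    by simp
qed

end

section \<open>Block words built from a non-simplicity witness\<close>

lemma crossing_below_threshold:
  fixes f :: "nat \<Rightarrow> real"
  assumes "c0 \<le> f 1" and "\<And>i. dl * f i \<le> f (Suc i)" and "f k < lam" and "1 \<le> k" and "0 \<le> dl"
  shows "\<exists>i. 1 \<le> i \<and> i \<le> k \<and> min c0 (dl * lam) \<le> f i \<and> f i < lam"
  using \<open>1 \<le> k\<close> \<open>f k < lam\<close>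
proof (induction k rule: nat_induct_at_least)
  case base
  then show ?case
    using \<open>c0 \<le> f 1\<close> by (intro exI[of _ 1]) auto
next
  case (Suc k)
  show ?case
  proof (cases "f k < lam")
    case True
    then obtain i where "1 \<le> i" "i \<le> k" "min c0 (dl * lam) \<le> f i" "f i < lam"
      using Suc.IH by blast
    then show ?thesis
      by (intro exI[of _ i]) auto
  next
    case False
    then have "dl * lam \<le> f (Suc k)"
      using mult_left_mono[of lam "f k" dl] \<open>0 \<le> dl\<close> assms(2)[of k] by linarith
    with Suc show ?thesis
      by (intro exI[of _ "Suc k"]) auto
  qed
qed

lemma length_concat_nonempty_blocks:
  assumes "\<And>j. B j \<noteq> []"
  shows "n \<le> length (concat (map B [0..<n]))"
proof (induction n)
  case (Suc n)
  then show ?case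
    using assms[of n] by (simp add: Suc_le_eq length_greater_0_conv[symmetric] del: length_greater_0_conv)
qed simp

lemma concat_blocks_prefix:
  assumes "a \<le> b"
  shows "concat (map B [0..<b]) = concat (map B [0..<a]) @ concat (map B [a..<b])"
  using upt_add_eq_append[of 0 a "b - a"] assms by simp

lemma prefix_word_concat_blocks:
  fixes B :: "nat \<Rightarrow> 'a list"
  assumes "\<And>j. B j \<noteq> []"
  obtains w where "\<And>n m. m \<le> length (concat (map B [0..<n]))
    \<Longrightarrow> prefix_word w m = take m (concat (map B [0..<n]))"
proof
  let ?L = "\<lambda>n. concat (map B [0..<n])"
  have same_nth: "?L a ! i = ?L b ! i" if "i < length (?L a)" and "i < length (?L b)" for a b i
  proof -
    have "?L (max a b) ! i = ?L a ! i"
      unfolding concat_blocks_prefix[of a "max a b" B, OF max.cobounded1]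
      using that(1) by (simp add: nth_append)
    moreover have "?L (max a b) ! i = ?L b ! i"
      unfolding concat_blocks_prefix[of b "max a b" B, OF max.cobounded2]
      using that(2) by (simp add: nth_append)
    ultimately show ?thesis
      by simp
  qed
  fix n m
  assume "m \<le> length (?L n)"
  show "prefix_word (\<lambda>i. ?L (Suc i) ! i) m = take m (?L n)"
    unfolding prefix_word_def
  proof (rule nth_equalityI)
    fix i
    assume "i < length (map (\<lambda>i. ?L (Suc i) ! i) [0..<m])"
    with \<open>m \<le> length (?L n)\<close> show "map (\<lambda>i. ?L (Suc i) ! i) [0..<m] ! i = take m (?L n) ! i"
      using same_nth[of i "Suc i" n] length_concat_nonempty_blocks[of B "Suc i", OF assms] by simp
  qed (use \<open>m \<le> length (?L n)\<close> in simp)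
qed

context stochastic_automaton
begin

text \<open>The mass that leaves the successors of r over all blocks sums to at most 1/2, and from there
  each block returns to r with probability at least d.\<close>
lemma prob_return_after_blocks:
  assumes idem: "idempotent_lw z" and "is_limit_word z" and "recurrent z r"
    and blocks: "\<And>j. realizes z (B j) d ((1 / 2) ^ (j + 2) / real (card (UNIV :: 'q set)))"
    and "0 \<le> d"
  shows "d / 2 \<le> prob Delta r (concat (map B [0..<Suc n])) r"
proof -
  let ?S = "{q. z r q}" and ?C = "real (card (UNIV :: 'q set))"
  have closed: "\<forall>q\<in>?S. \<forall>q'. z q q' \<longrightarrow> q' \<in> ?S"
    by (rule idempotent_lw_successors_closed[OF idem])
  have "r \<in> ?S"
    using recurrent_self_loop[OF idem \<open>is_limit_word z\<close> \<open>recurrent z r\<close>] by simp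
  then have "1 \<le> prob_set Delta r [] ?S"
    using prob_le_prob_set[of r ?S r "[]"] by simp
  moreover have "prob_set Delta r [] ?S - ?C * (\<Sum>j<n. (1 / 2) ^ (j + 2) / ?C)
      \<le> prob_set Delta r ([] @ concat (map B [0..<n])) ?S"
    by (rule prob_set_closed_blocks[OF closed blocks]) simp
  moreover have "?C * (\<Sum>j<n. (1 / 2) ^ (j + 2) / ?C) = 1 / 2 - (1 / 2) ^ (n + 1)"
    by (induction n) (simp_all add: sum_divide_distrib[symmetric])
  moreover have "0 \<le> (1 / 2 :: real) ^ (n + 1)"
    by simp
  ultimately have "1 / 2 \<le> prob_set Delta r (concat (map B [0..<n])) ?S"
    unfolding append_Nil by linarith
  then have "d * (1 / 2) \<le> d * prob_set Delta r (concat (map B [0..<n])) ?S"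
    using \<open>0 \<le> d\<close> by (rule mult_left_mono)
  also have "\<dots> \<le> prob Delta r (concat (map B [0..<n]) @ B n) r"
    using \<open>recurrent z r\<close> blocks unfolding recurrent_def realizes_def
    by (intro prob_set_mult_le_prob_append) blast
  finally show ?thesis
    by simp
qed

end

locale witness_blocks = stochastic_automaton Delta
  for Delta :: "'q::finite \<Rightarrow> 'a::finite \<Rightarrow> 'q \<Rightarrow> real" +
  fixes u v w :: "'q lword" and r q0 t :: 'q and du dv d' dw :: real and eta :: "nat \<Rightarrow> real"
    and U V W :: "nat \<Rightarrow> 'a list" and K :: "nat \<Rightarrow> nat"
  assumes idempotent_z: "idempotent_lw (lw_concat (lw_concat u (sharp v)) w)"
    and limit_word_z: "is_limit_word (lw_concat (lw_concat u (sharp v)) w)"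
    and recurrent_r: "recurrent (lw_concat (lw_concat u (sharp v)) w) r"
    and u_r_q0: "u r q0" and v_q0_t: "v q0 t" and v_t_t: "v t t" and transient_t: "transient v t"
    and du_pos: "0 < du" and dv_pos: "0 < dv" and d'_pos: "0 < d'" and dw_pos: "0 < dw"
    and eta_nonneg: "\<And>n. 0 \<le> eta n"
    and eta_small: "\<And>n. 3 * real (card (UNIV :: 'q set)) ^ 3 * eta n \<le> (1 / 2) ^ (n + 2)"
    and realizes_U: "\<And>n. realizes u (U n) du (eta n)"
    and realizes_V: "\<And>n. realizes v (V n) dv (eta n)"
    and K_pos: "\<And>n. 1 \<le> K n"
    and realizes_V_power: "\<And>n. realizes (sharp v) (concat (replicate (K n) (V n))) d' (eta n)"
    and realizes_W: "\<And>n. realizes w (W n) dw (eta n)"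
begin

definition block :: "nat \<Rightarrow> 'a list" where
  "block n = (U n @ concat (replicate (K n) (V n))) @ W n"

definition blocks_upto :: "nat \<Rightarrow> 'a list" where
  "blocks_upto n = concat (map block [0..<n])"

definition hit :: "nat \<Rightarrow> nat \<Rightarrow> real" where
  "hit n i = prob Delta r (blocks_upto n @ U n @ concat (replicate i (V n))) t"

lemma error_bounds:
  shows "real (card (UNIV :: 'q set)) * (eta n + eta n) \<le> (1 / 2) ^ n"
    and "real (card (UNIV :: 'q set)) * (real (card (UNIV :: 'q set)) * (eta n + eta n) + eta n)
      \<le> (1 / 2) ^ (n + 2) / real (card (UNIV :: 'q set))"
proof -
  let ?C = "real (card (UNIV :: 'q set))"
  have "1 \<le> ?C"
    by (simp add: Suc_le_eq)
  then have "?C \<le> ?C ^ 3"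
    using power_increasing[of 1 3 ?C] by simp
  with \<open>1 \<le> ?C\<close> have "2 * ?C * eta n \<le> 3 * ?C ^ 3 * eta n"
    by (intro mult_right_mono eta_nonneg) linarith
  then have "?C * (eta n + eta n) \<le> 3 * ?C ^ 3 * eta n"
    by (simp add: algebra_simps)
  also have "\<dots> \<le> (1 / 2) ^ (n + 2)"
    by (rule eta_small)
  also have "\<dots> \<le> (1 / 2) ^ n"
    by (rule power_decreasing) auto
  finally show "?C * (eta n + eta n) \<le> (1 / 2) ^ n" .
  have "1 * eta n \<le> ?C * eta n"
    using \<open>1 \<le> ?C\<close> by (intro mult_right_mono eta_nonneg)
  then have "?C * (?C * (eta n + eta n) + eta n) \<le> ?C * (?C * (eta n + eta n) + ?C * eta n)"
    by (intro mult_left_mono add_left_mono) auto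
  also have "\<dots> = 3 * ?C ^ 3 * eta n / ?C"
    by (simp add: power3_eq_cube algebra_simps)
  also have "\<dots> \<le> (1 / 2) ^ (n + 2) / ?C"
    using eta_small[of n] by (rule divide_right_mono) simp
  finally show "?C * (?C * (eta n + eta n) + eta n) \<le> (1 / 2) ^ (n + 2) / ?C" .
qed

lemma realizes_segment:
  "realizes (lw_concat u (sharp v)) (U n @ concat (replicate (K n) (V n))) (du * d')
    (real (card (UNIV :: 'q set)) * (eta n + eta n))"
  by (rule realizes_concat[OF realizes_U realizes_V_power])
    (use d'_pos eta_nonneg in \<open>auto simp: less_imp_le\<close>)

lemma realizes_block:
  "realizes (lw_concat (lw_concat u (sharp v)) w) (block n) (du * d' * dw)
    ((1 / 2) ^ (n + 2) / real (card (UNIV :: 'q set)))"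
proof -
  have "realizes (lw_concat (lw_concat u (sharp v)) w) (block n) (du * d' * dw)
      (real (card (UNIV :: 'q set)) * (real (card (UNIV :: 'q set)) * (eta n + eta n) + eta n))"
    unfolding block_def
    by (rule realizes_concat[OF realizes_segment realizes_W])
      (use dw_pos eta_nonneg in \<open>auto intro: mult_nonneg_nonneg simp: less_imp_le\<close>)
  then show ?thesis
    using error_bounds(2) by (rule realizes_mono)
qed

lemma hit_first: "du * d' * dw / 2 * (du * dv) \<le> hit (Suc n) 1"
proof -
  have "du * dv \<le> prob Delta r (U (Suc n)) q0 * prob Delta q0 (V (Suc n)) t"
    using realizes_U realizes_V u_r_q0 v_q0_t du_pos dv_pos unfolding realizes_def
    by (intro mult_mono) (auto simp: prob_nonneg)
  also have "\<dots> \<le> prob Delta r (U (Suc n) @ V (Suc n)) t"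
    by (rule prob_mult_le_prob_append)
  finally have "du * d' * dw / 2 * (du * dv)
      \<le> prob Delta r (blocks_upto (Suc n)) r * prob Delta r (U (Suc n) @ V (Suc n)) t"
    using prob_return_after_blocks[OF idempotent_z limit_word_z recurrent_r realizes_block, of n]
      du_pos d'_pos dv_pos dw_pos
    unfolding blocks_upto_def by (intro mult_mono) (auto simp: prob_nonneg)
  also have "\<dots> \<le> hit (Suc n) 1"
    unfolding hit_def
    using prob_mult_le_prob_append[of r "blocks_upto (Suc n)" r "U (Suc n) @ V (Suc n)" t] by simp
  finally show ?thesis .
qed

lemma hit_step: "dv * hit n i \<le> hit n (Suc i)"
proof -
  have "dv \<le> prob Delta t (V n) t"
    using realizes_V v_t_t unfolding realizes_def by blast
  then have "dv * hit n i \<le> prob Delta t (V n) t * hit n i"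
    by (rule mult_right_mono) (simp add: hit_def prob_nonneg)
  also have "\<dots> \<le> hit n (Suc i)"
    unfolding hit_def concat_replicate_Suc_snoc
    using prob_mult_le_prob_append[of r "blocks_upto n @ U n @ concat (replicate i (V n))" t "V n" t]
    by (simp add: mult.commute)
  finally show ?thesis .
qed

lemma hit_last: "hit n (K n) \<le> (1 / 2) ^ n"
proof -
  have "\<not> lw_concat u (sharp v) q t" for q
    using transient_t unfolding lw_concat_def sharp_def transient_def by blast
  then have "prob Delta q (U n @ concat (replicate (K n) (V n))) t
      \<le> real (card (UNIV :: 'q set)) * (eta n + eta n)" for q
    using realizes_segment unfolding realizes_def by blast
  then have "hit n (K n) \<le> real (card (UNIV :: 'q set)) * (eta n + eta n)"
    unfolding hit_def by (rule prob_append_le)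
  with error_bounds(1)[of n] show ?thesis
    by linarith
qed

lemma block_nonempty: "block n \<noteq> []"
proof -
  obtain t' where "v t t'" and "\<not> v t' t"
    using transient_t unfolding transient_def recurrent_def by blast
  with v_t_t have "t' \<noteq> t"
    by blast
  moreover have "0 < prob Delta t (V n) t'"
    using realizes_V \<open>v t t'\<close> dv_pos unfolding realizes_def by (meson less_le_trans)
  ultimately have "V n \<noteq> []"
    by auto
  with K_pos[of n] show ?thesis
    unfolding block_def by (cases "K n") auto
qed

text \<open>Within block n the probability of t starts above a constant, shrinks by at most the factor dv
  per copy of V n and ends below (1/2)^n, so it must stop in the window [min c0 (dv lam), lam) for any
  lam.\<close>
lemma oscillation: "\<exists>word. oscillates Delta word r t"
proof -
  obtain word where word:
    "\<And>n m. m \<le> length (blocks_upto n) \<Longrightarrow> prefix_word word m = take m (blocks_upto n)"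
    using prefix_word_concat_blocks[of block] block_nonempty unfolding blocks_upto_def by blast
  let ?c0 = "du * d' * dw / 2 * (du * dv)"
  have "\<exists>c>0. \<forall>N. \<exists>m\<ge>N.
      c \<le> prob Delta r (prefix_word word m) t \<and> prob Delta r (prefix_word word m) t < lam"
    if "0 < lam" for lam
  proof (intro exI[of _ "min ?c0 (dv * lam)"] conjI allI)
    show "0 < min ?c0 (dv * lam)"
      using du_pos d'_pos dw_pos dv_pos \<open>0 < lam\<close> by simp
    fix N
    obtain n0 where "(1 / 2 :: real) ^ n0 < lam"
      using real_arch_pow_inv[of lam "1 / 2"] \<open>0 < lam\<close> by auto
    define n where "n = Suc (max N n0)"
    have "(1 / 2 :: real) ^ n \<le> (1 / 2) ^ n0"
      by (rule power_decreasing) (auto simp: n_def)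
    with hit_last[of n] \<open>(1 / 2) ^ n0 < lam\<close> have "hit n (K n) < lam"
      by linarith
    then obtain i where "i \<le> K n" and i: "min ?c0 (dv * lam) \<le> hit n i" "hit n i < lam"
      using crossing_below_threshold[of ?c0 "hit n" dv "K n" lam] hit_first hit_step K_pos dv_pos
      unfolding n_def by fastforce
    define m where "m = length (blocks_upto n @ U n @ concat (replicate i (V n)))"
    have "blocks_upto (Suc n) = (blocks_upto n @ U n @ concat (replicate i (V n)))
        @ concat (replicate (K n - i) (V n)) @ W n"
      using \<open>i \<le> K n\<close> replicate_add[of i "K n - i" "V n"]
      by (simp add: blocks_upto_def block_def)
    then have "prefix_word word m = blocks_upto n @ U n @ concat (replicate i (V n))"
      using word[of m "Suc n"] unfolding m_def by simp
    moreover have "N \<le> m"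
      using length_concat_nonempty_blocks[of block n, OF block_nonempty]
      unfolding m_def n_def blocks_upto_def by simp
    ultimately show "\<exists>m\<ge>N. min ?c0 (dv * lam) \<le> prob Delta r (prefix_word word m) t
        \<and> prob Delta r (prefix_word word m) t < lam"
      using i unfolding hit_def by auto
  qed
  then show ?thesis
    unfolding oscillates_def by blast
qed

end

context stochastic_automaton
begin

lemma non_simplicity_witness_oscillates:
  assumes "non_simplicity_witness Delta u v w"
  shows "\<exists>word r t. oscillates Delta word r t"
proof -
  let ?z = "lw_concat (lw_concat u (sharp v)) w" and ?C = "real (card (UNIV :: 'q set))"
  obtain r t0 where u: "u \<in> markov_monoid Delta" and v: "v \<in> markov_monoid Delta"
    and w: "w \<in> markov_monoid Delta" and "idempotent_lw v" and "idempotent_lw ?z"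
    and "recurrent ?z r" and "lw_concat u v r t0" and "transient v t0"
    using assms unfolding non_simplicity_witness_def by blast
  then obtain q0 where "u r q0" and "v q0 t0"
    unfolding lw_concat_def by blast
  then obtain t where "v q0 t" and "v t t" and "transient v t"
    using transient_self_loop[OF \<open>idempotent_lw v\<close> _ \<open>transient v t0\<close>] by blast
  have "?z \<in> markov_monoid Delta"
    by (intro markov_monoid.concat markov_monoid.iter u v w \<open>idempotent_lw v\<close>)
  then have "is_limit_word ?z"
    using realizable_markov_monoid realizable_is_limit_word by blast
  obtain du dv dw where "0 < du" "realizable u du" "0 < dv" "realizable v dv" "0 < dw" "realizable w dw"
    using realizable_markov_monoid[OF u] realizable_markov_monoid[OF v] realizable_markov_monoid[OF w]
    by blast
  then obtain d' where "0 < d'" and sharp_powers: "\<forall>e>0. \<exists>y k. 1 \<le> k \<and> realizes v y dv e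
      \<and> realizes (sharp v) (concat (replicate k y)) d' e"
    using realizable_sharp_powers[OF \<open>idempotent_lw v\<close>] by blast
  define eta where "eta n = (1 / 2) ^ (n + 2) / (3 * ?C ^ 3)" for n
  have eta_pos: "0 < eta n" for n
    by (simp add: eta_def)
  have "\<forall>n. \<exists>y. realizes u y du (eta n)" and "\<forall>n. \<exists>y. realizes w y dw (eta n)"
    using \<open>realizable u du\<close> \<open>realizable w dw\<close> eta_pos unfolding realizable_def by blast+
  then obtain U W where U: "\<And>n. realizes u (U n) du (eta n)" and W: "\<And>n. realizes w (W n) dw (eta n)"
    by metis
  have "\<forall>n. \<exists>y k. 1 \<le> k \<and> realizes v y dv (eta n)
      \<and> realizes (sharp v) (concat (replicate k y)) d' (eta n)"
    using sharp_powers eta_pos by blast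
  then obtain V K where VK: "\<And>n. 1 \<le> K n \<and> realizes v (V n) dv (eta n)
      \<and> realizes (sharp v) (concat (replicate (K n) (V n))) d' (eta n)"
    by metis
  interpret witness_blocks Delta u v w r q0 t du dv d' dw eta U V W K
    using \<open>idempotent_lw ?z\<close> \<open>is_limit_word ?z\<close> \<open>recurrent ?z r\<close> \<open>u r q0\<close> \<open>v q0 t\<close> \<open>v t t\<close>
      \<open>transient v t\<close> \<open>0 < du\<close> \<open>0 < dv\<close> \<open>0 < d'\<close> \<open>0 < dw\<close> eta_pos U VK W
    by unfold_locales (auto simp: eta_def less_imp_le)
  show ?thesis
    using oscillation by blast
qed

end

theorem proposition5p11:
  fixes Delta :: "'q::finite \<Rightarrow> 'a::finite \<Rightarrow> 'q \<Rightarrow> real"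
  assumes "stochastic Delta"
    and "\<exists>u v w. non_simplicity_witness Delta u v w"
  shows "\<not> simple_automaton Delta"
proof -
  interpret stochastic_automaton Delta
    by unfold_locales (rule assms(1))
  obtain u v w where "non_simplicity_witness Delta u v w"
    using assms(2) by blast
  then obtain word r t where "oscillates Delta word r t"
    using non_simplicity_witness_oscillates by blast
  then have "\<not> simple_process Delta word r"
    by (rule oscillates_not_simple_process)
  then show ?thesis
    unfolding simple_automaton_def by blast
qed

end
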